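(* Let $n\ge r\ge 1$ be integers and let $\overline{X}\in\mathcal{S}_{+}^{n,r}:=\mathbb{R}_{+}^{n\times r}\cap{\rm St}(n,r)$. Suppose that, in the case $n>r>1$, $\overline{X}$ has no zero rows. Define \[ \kappa:=\begin{cases}2.1\sqrt{n}&\text{if } n=r,\\ 1&\text{if } n>r=1,\\ \dfrac{2.1\sqrt{r}\,[1+3r(n-r)]}{\overline{X}_{i^*j^*}}&\text{if } n>r>1,\end{cases} \] where $\overline{X}_{i^*j^*}$ is the smallest nonzero entry of $\overline{X}$. Then there exists $\delta>0$ such that for all $X\in\mathbb{R}^{n\times r}$ with $\|X-\overline{X}\|_F\le\delta$, \[ {\rm dist}(X,\mathcal{S}_{+}^{n,r})\le(\kappa+1)\big[{\rm dist}(X,\mathbb{R}_{+}^{n\times r})+{\rm dist}(X,{\rm St}(n,r))\big]. \]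
   Context: ${\rm St}(n,r):=\{X\in\mathbb{R}^{n\times r}: X^\top X=I_r\}$ is the Stiefel manifold, $\mathbb{R}_{+}^{n\times r}$ is the cone of entrywise nonnegative $n\times r$ matrices, and $\mathcal{S}_{+}^{n,r}:=\mathbb{R}_{+}^{n\times r}\cap{\rm St}(n,r)$. For a closed set $\Omega\subset\mathbb{R}^{n\times r}$, ${\rm dist}(X,\Omega)=\inf_{Z\in\Omega}\|X-Z\|_F$, with $\|\cdot\|_F$ the Frobenius norm. *)

theory Defs
  imports "HOL-Analysis.Analysis"
begin

text \<open>n x r real matrices are represented as real^'r^'n (rows indexed by 'n,
  columns by 'r); n = CARD('n), r = CARD('r). The norm on this type is the
  Frobenius norm, and infdist is the distance to a set.\<close>

definition stiefel :: "(real^'r^'n) set" where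
  "stiefel = {X. transpose X ** X = mat 1}"

definition nonneg_mats :: "(real^'r^'n) set" where
  "nonneg_mats = {X. \<forall>i j. X $ i $ j \<ge> 0}"

definition nonneg_stiefel :: "(real^'r^'n) set" where
  "nonneg_stiefel = nonneg_mats \<inter> stiefel"

definition no_zero_rows :: "real^'r^'n \<Rightarrow> bool" where
  "no_zero_rows X \<longleftrightarrow> (\<forall>i. \<exists>j. X $ i $ j \<noteq> 0)"

definition min_nonzero_entry :: "real^'r^'n \<Rightarrow> real" where
  "min_nonzero_entry X = Min {X $ i $ j | i j. X $ i $ j \<noteq> 0}"

definition kappa :: "real^'r^'n \<Rightarrow> real" where
  "kappa X =
    (let n = real CARD('n); r = real CARD('r) in
     if CARD('n) = CARD('r) then 2.1 * sqrt n
     else if CARD('r) = 1 then 1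
     else 2.1 * sqrt r * (1 + 3 * r * (n - r)) / min_nonzero_entry X)"

end

theory Submission
  imports Defs
begin

text \<open>
  The columns of a nonnegative Stiefel matrix Xbar have disjoint supports, so when Xbar
  has no zero rows its support is the graph of a surjection k from rows to columns, with
  entries at least lo (the smallest nonzero entry) on the graph. For a Stiefel matrix Y
  near Xbar, keep the entries of Y on this graph and normalise the columns: this is a
  point Z of the nonnegative Stiefel set. An off-graph positive entry Y i j meets the
  large entry Y i (k i) in the inner product of the columns j and k i, which vanishes for
  Y up to terms in the negative part Y-; summing over the off-graph entries gives
  norm (Y - Z) <= kappa * norm Y-. As norm Y- is the distance from Y to the nonnegative
  matrices, hence 1-Lipschitz in Y, dist X S+ <= dist X Y + kappa * (dist X N + dist X Y),
  and the infimum over Y gives the theorem. For a single column (where kappa = 1 once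
  n > 1) the normalised positive part of X does the job directly, even globally.
\<close>

section \<open>Frobenius norm and columns\<close>

lemma norm_matrix_power2:
  "(norm (A :: real^'r^'n))\<^sup>2 = (\<Sum>i\<in>UNIV. \<Sum>j\<in>UNIV. (A$i$j)\<^sup>2)"
  by (simp add: norm_vec_def L2_set_def sum_nonneg)

lemma norm_matrix_power2_columns:
  "(norm (A :: real^'r^'n))\<^sup>2 = (\<Sum>j\<in>UNIV. (norm (column j A))\<^sup>2)"
  unfolding norm_matrix_power2 by (subst sum.swap) (simp add: norm_vec_def L2_set_def sum_nonneg column_def)

lemma norm_matrix_le_entrywise:
  fixes A B :: "real^'r^'n"
  assumes "\<And>i j. \<bar>A$i$j\<bar> \<le> \<bar>B$i$j\<bar>"
  shows "norm A \<le> norm B"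
  using assms by (intro norm_le_componentwise_cart) simp

lemma column_diff: "column j (A - B) = column j A - column j B"
  by (simp add: column_def vec_eq_iff)

lemma column_add: "column j (A + B) = column j A + column j B"
  by (simp add: column_def vec_eq_iff)

lemma norm_column_le: "norm (column j (A :: real^'r^'n)) \<le> norm A"
proof -
  have "(norm (column j A))\<^sup>2 \<le> (norm A)\<^sup>2"
    unfolding norm_matrix_power2_columns by (rule member_le_sum) auto
  then show ?thesis by (simp add: power2_le_iff_abs_le)
qed

lemma abs_entry_le_norm: "\<bar>(A :: real^'r^'n)$i$j\<bar> \<le> norm A"
  using component_le_norm_cart[of "A$i" j] Finite_Cartesian_Product.norm_nth_le[of A i] by linarith

lemma stiefel_iff_columns:
  "(Y :: real^'r^'n) \<in> stiefel \<longleftrightarrow> (\<forall>j l. column j Y \<bullet> column l Y = (if j = l then 1 else 0))"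
  by (simp add: stiefel_def matrix_mult_transpose_dot_column vec_eq_iff mat_def)

lemma stiefel_norm_column: "Y \<in> stiefel \<Longrightarrow> norm (column j Y) = 1"
  by (simp add: stiefel_iff_columns norm_eq_1)

lemma stiefel_orthogonal_columns: "Y \<in> stiefel \<Longrightarrow> j \<noteq> l \<Longrightarrow> column j Y \<bullet> column l Y = 0"
  by (simp add: stiefel_iff_columns)

section \<open>Distance to the nonnegative matrices\<close>

lemma le_mult_add_infdist:
  fixes u v c :: real
  assumes "A \<noteq> {}" "0 < c" "\<And>y. y \<in> A \<Longrightarrow> u \<le> c * (v + dist x y)"
  shows "u \<le> c * (v + infdist x A)"
proof -
  have "u / c - v \<le> dist x y" if "y \<in> A" for y
  proof -
    have "u / c \<le> v + dist x y"
      using assms(3)[OF that] assms(2) by (simp add: pos_divide_le_eq mult.commute)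
    then show ?thesis by simp
  qed
  then have "u / c - v \<le> infdist x A"
    unfolding infdist_notempty[OF assms(1)] by (intro cINF_greatest[OF assms(1)])
  then have "u \<le> (v + infdist x A) * c"
    using pos_divide_le_eq[OF assms(2)] by (metis add.commute diff_le_eq)
  then show ?thesis by (simp add: mult.commute)
qed

definition pos_part :: "real^'r^'n \<Rightarrow> real^'r^'n" where
  "pos_part X = (\<chi> i j. max (X$i$j) 0)"

definition neg_part :: "real^'r^'n \<Rightarrow> real^'r^'n" where
  "neg_part X = (\<chi> i j. max (- X$i$j) 0)"

lemma pos_part_eq: "pos_part X = X + neg_part X"
  by (simp add: pos_part_def neg_part_def vec_eq_iff max_def)

lemma minus_pos_part: "X - pos_part X = - neg_part X"
  by (simp add: pos_part_eq)

lemma pos_part_in_nonneg_mats: "pos_part X \<in> nonneg_mats"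
  by (simp add: pos_part_def nonneg_mats_def)

lemma infdist_nonneg_mats: "infdist X nonneg_mats = norm (neg_part X)"
proof (rule antisym)
  show "infdist X nonneg_mats \<le> norm (neg_part X)"
    using infdist_le[OF pos_part_in_nonneg_mats[of X], of X] by (simp add: dist_norm minus_pos_part)
  have dist_ge: "norm (neg_part X) \<le> dist X W" if "W \<in> nonneg_mats" for W
  proof -
    have "\<bar>neg_part X $ i $ j\<bar> \<le> \<bar>(X - W) $ i $ j\<bar>" for i j
      using that unfolding nonneg_mats_def neg_part_def by (simp add: abs_if) (smt (verit))
    then show ?thesis unfolding dist_norm by (rule norm_matrix_le_entrywise)
  qed
  have ne: "(nonneg_mats :: (real^'r^'n) set) \<noteq> {}"
    using pos_part_in_nonneg_mats by blast
  show "norm (neg_part X) \<le> infdist X nonneg_mats"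
    unfolding infdist_notempty[OF ne] by (rule cINF_greatest[OF ne dist_ge])
qed

lemma norm_diff_sgn:
  fixes x :: "'a::real_normed_vector"
  assumes "x \<noteq> 0"
  shows "norm (x - sgn x) = \<bar>norm x - 1\<bar>"
proof -
  have "x - sgn x = (1 - 1 / norm x) *\<^sub>R x"
    by (simp add: sgn_div_norm algebra_simps divide_inverse)
  then have "norm (x - sgn x) = \<bar>(1 - 1 / norm x) * norm x\<bar>"
    by (simp add: abs_mult)
  then show ?thesis
    using assms by (simp add: left_diff_distrib)
qed

lemma stiefel_single_column_iff:
  assumes "CARD('r) = 1"
  shows "(Y :: real^'r^'n) \<in> stiefel \<longleftrightarrow> norm Y = 1"
proof -
  obtain j :: 'r where UNIV_r: "UNIV = {j}"
    using assms card_1_singletonE by blast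
  have "norm Y = norm (column j Y)"
    using norm_matrix_power2_columns[of Y] by (simp add: UNIV_r power2_eq_iff_nonneg)
  moreover have "j' = j" for j' :: 'r using UNIV_r by blast
  then have "Y \<in> stiefel \<longleftrightarrow> column j Y \<bullet> column j Y = 1"
    unfolding stiefel_iff_columns by metis
  ultimately show ?thesis by (simp add: norm_eq_1)
qed

lemma infdist_nonneg_stiefel_single_column_le:
  fixes X Y :: "real^'r^'n"
  assumes "CARD('r) = 1" and "(nonneg_stiefel :: (real^'r^'n) set) \<noteq> {}" and "Y \<in> stiefel"
  shows "infdist X nonneg_stiefel \<le> 2 * norm (neg_part X) + dist X Y"
proof (cases "pos_part X = 0")
  case True
  then have "norm X = norm (neg_part X)"
    using minus_pos_part[of X] by (metis diff_zero norm_minus_cancel)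
  obtain Z :: "real^'r^'n" where Z: "Z \<in> nonneg_stiefel" using assms(2) by blast
  have "norm Z = 1" and "norm Y = 1"
    using Z assms(1,3) by (auto simp: nonneg_stiefel_def stiefel_single_column_iff)
  have "infdist X nonneg_stiefel \<le> norm X + norm Z"
    using infdist_le[OF Z, of X] norm_triangle_ineq4[of X Z] by (simp add: dist_norm)
  moreover have "norm Y \<le> norm X + dist X Y"
    using norm_triangle_ineq2[of Y X] by (simp add: dist_norm norm_minus_commute)
  ultimately show ?thesis
    using \<open>norm X = norm (neg_part X)\<close> \<open>norm Z = 1\<close> \<open>norm Y = 1\<close> by linarith
next
  case False
  let ?P = "pos_part X"
  have "norm Y = 1" using assms(1,3) by (simp add: stiefel_single_column_iff)
  have "sgn ?P \<in> nonneg_stiefel"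
    using False assms(1)
    by (simp add: nonneg_stiefel_def nonneg_mats_def stiefel_single_column_iff norm_sgn)
      (simp add: sgn_div_norm pos_part_def)
  have "norm (?P - sgn ?P) \<le> norm (?P - Y)"
    using norm_diff_sgn[OF False] norm_triangle_ineq3[of ?P Y] \<open>norm Y = 1\<close> by simp
  also have "\<dots> \<le> norm (neg_part X) + dist X Y"
    using norm_triangle_ineq[of "?P - X" "X - Y"] minus_pos_part[of X]
    by (simp add: dist_norm norm_minus_commute)
  moreover have "dist X (sgn ?P) \<le> norm (neg_part X) + norm (?P - sgn ?P)"
    using dist_triangle[of X "sgn ?P" ?P] by (simp add: dist_norm minus_pos_part)
  ultimately show ?thesis using infdist_le[OF \<open>sgn ?P \<in> nonneg_stiefel\<close>, of X] by linarith
qed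

lemma infdist_nonneg_stiefel_single_column:
  fixes X :: "real^'r^'n"
  assumes "CARD('r) = 1" and "(nonneg_stiefel :: (real^'r^'n) set) \<noteq> {}"
  shows "infdist X nonneg_stiefel \<le> 2 * (infdist X nonneg_mats + infdist X stiefel)"
proof (rule le_mult_add_infdist)
  show "(stiefel :: (real^'r^'n) set) \<noteq> {}" using assms(2) by (auto simp: nonneg_stiefel_def)
  show "infdist X nonneg_stiefel \<le> 2 * (infdist X nonneg_mats + dist X Y)"
    if "Y \<in> stiefel" for Y :: "real^'r^'n"
    using infdist_nonneg_stiefel_single_column_le[OF assms that, of X] infdist_nonneg_mats[of X]
      zero_le_dist[of X Y] unfolding distrib_left by linarith
qed simp

section \<open>Nonnegative Stiefel matrices\<close>

lemma nonneg_stiefel_nonneg: "Xb \<in> nonneg_stiefel \<Longrightarrow> 0 \<le> Xb$i$j"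
  by (simp add: nonneg_stiefel_def nonneg_mats_def)

lemma nonneg_stiefel_stiefel: "Xb \<in> nonneg_stiefel \<Longrightarrow> Xb \<in> stiefel"
  by (simp add: nonneg_stiefel_def)

lemma nonneg_stiefel_disjoint_supports:
  assumes "Xb \<in> nonneg_stiefel" and "j \<noteq> l"
  shows "Xb$i$j * Xb$i$l = 0"
proof -
  have "(\<Sum>i\<in>UNIV. Xb$i$j * Xb$i$l) = 0"
    using stiefel_orthogonal_columns[OF nonneg_stiefel_stiefel[OF assms(1)] assms(2)]
    by (simp add: inner_vec_def column_def)
  then show ?thesis
    using nonneg_stiefel_nonneg[OF assms(1)] by (simp add: sum_nonneg_eq_0_iff)
qed

lemma nonneg_stiefel_column_nonzero:
  assumes "Xb \<in> nonneg_stiefel"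
  obtains i where "Xb$i$j \<noteq> 0"
proof -
  have "column j Xb \<noteq> 0"
    using stiefel_norm_column[OF nonneg_stiefel_stiefel[OF assms], of j] by auto
  then show ?thesis using that by (auto simp: column_def vec_eq_iff)
qed

lemma nonneg_stiefel_le_1:
  assumes "Xb \<in> nonneg_stiefel"
  shows "Xb$i$j \<le> 1"
  using component_le_norm_cart[of "column j Xb" i]
    stiefel_norm_column[OF nonneg_stiefel_stiefel[OF assms]]
  by (simp add: column_def)

lemma nonneg_stiefel_support_graph:
  assumes "Xb \<in> nonneg_stiefel" and "no_zero_rows Xb"
  obtains k where "surj k" and "\<And>i j. Xb$i$j \<noteq> 0 \<longleftrightarrow> k i = j"
proof
  define k where "k i = (SOME j. Xb$i$j \<noteq> 0)" for i
  have "Xb$i$(k i) \<noteq> 0" for i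
  proof -
    have "\<exists>j. Xb$i$j \<noteq> 0" using assms(2) unfolding no_zero_rows_def by blast
    then show ?thesis unfolding k_def by (rule someI_ex)
  qed
  then show graph: "Xb$i$j \<noteq> 0 \<longleftrightarrow> k i = j" for i j
    using nonneg_stiefel_disjoint_supports[OF assms(1), of j "k i" i] by auto
  show "surj k"
  proof (rule surjI)
    fix j
    have "\<exists>i. Xb$i$j \<noteq> 0" using nonneg_stiefel_column_nonzero[OF assms(1)] by blast
    then have "Xb$(SOME i. Xb$i$j \<noteq> 0)$j \<noteq> 0" by (rule someI_ex)
    then show "k (SOME i. Xb$i$j \<noteq> 0) = j" using graph by blast
  qed
qed

lemma nonneg_stiefel_square_no_zero_rows:
  fixes Xb :: "real^'r^'n"
  assumes "Xb \<in> nonneg_stiefel" and "CARD('n) = CARD('r)"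
  shows "no_zero_rows Xb"
proof -
  define g where "g j = (SOME i. Xb$i$j \<noteq> 0)" for j
  have g: "Xb$(g j)$j \<noteq> 0" for j
  proof -
    have "\<exists>i. Xb$i$j \<noteq> 0" using nonneg_stiefel_column_nonzero[OF assms(1)] by blast
    then show ?thesis unfolding g_def by (rule someI_ex)
  qed
  have "inj g"
  proof (rule injI)
    fix j l assume "g j = g l"
    show "j = l"
    proof (rule ccontr)
      assume "j \<noteq> l"
      then have "Xb$(g l)$j * Xb$(g l)$l = 0"
        by (rule nonneg_stiefel_disjoint_supports[OF assms(1)])
      with g[of j] g[of l] \<open>g j = g l\<close> show False by simp
    qed
  qed
  then have "card (range g) = CARD('n)"
    using assms(2) card_image by metis
  then have "range g = UNIV"
    by (simp add: card_eq_UNIV_imp_eq_UNIV)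
  show ?thesis
    unfolding no_zero_rows_def
  proof
    fix i
    have "i \<in> range g" using \<open>range g = UNIV\<close> by simp
    then obtain j where "i = g j" by blast
    then show "\<exists>j. Xb$i$j \<noteq> 0" using g by blast
  qed
qed

lemma nonneg_stiefel_square_entry:
  fixes Xb :: "real^'r^'n"
  assumes "Xb \<in> nonneg_stiefel" and "CARD('n) = CARD('r)" and "Xb$i$j \<noteq> 0"
  shows "Xb$i$j = 1"
proof -
  obtain k where "surj k" and graph: "\<And>i j. Xb$i$j \<noteq> 0 \<longleftrightarrow> k i = j"
    using nonneg_stiefel_support_graph[OF assms(1) nonneg_stiefel_square_no_zero_rows[OF assms(1,2)]]
    by blast
  have "inj k"
    using \<open>surj k\<close> assms(2) by (intro eq_card_imp_inj_on) simp_all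
  then have "Xb$i'$j = 0" if "i' \<noteq> i" for i'
    using graph assms(3) that by (metis injD)
  then have "column j Xb = Xb$i$j *\<^sub>R axis i 1"
    by (auto simp: column_def vec_eq_iff axis_def)
  then have "norm (column j Xb) = \<bar>Xb$i$j\<bar>"
    by simp
  then show ?thesis
    using stiefel_norm_column[OF nonneg_stiefel_stiefel[OF assms(1)]] nonneg_stiefel_nonneg[OF assms(1)]
    by (metis abs_of_nonneg)
qed

lemma finite_nonzero_entries: "finite {X $ i $ j | i j. X $ i $ j \<noteq> 0}"
  by (rule finite_subset[of _ "range (\<lambda>(i, j). X$i$j)"]) auto

lemma min_nonzero_entry_le:
  assumes "Xb$i$j \<noteq> 0"
  shows "min_nonzero_entry Xb \<le> Xb$i$j"
  unfolding min_nonzero_entry_def using assms finite_nonzero_entries by (intro Min_le) auto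

lemma min_nonzero_entry_nonneg_stiefel:
  assumes "Xb \<in> nonneg_stiefel"
  shows "0 < min_nonzero_entry Xb" and "min_nonzero_entry Xb \<le> 1"
proof -
  obtain i j where "Xb$i$j \<noteq> 0"
    using nonneg_stiefel_column_nonzero[OF assms] by blast
  then have "min_nonzero_entry Xb \<in> {Xb $ i $ j | i j. Xb $ i $ j \<noteq> 0}"
    unfolding min_nonzero_entry_def using finite_nonzero_entries by (intro Min_in) auto
  then show "0 < min_nonzero_entry Xb" and "min_nonzero_entry Xb \<le> 1"
    using nonneg_stiefel_nonneg[OF assms] nonneg_stiefel_le_1[OF assms]
    by (force simp: order_less_le)+
qed

section \<open>Normalising columns\<close>

definition normalize_columns :: "real^'r^'n \<Rightarrow> real^'r^'n" where
  "normalize_columns D = (\<chi> i j. D$i$j / norm (column j D))"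

lemma column_normalize_columns: "column j (normalize_columns D) = sgn (column j D)"
  by (simp add: normalize_columns_def column_def sgn_div_norm vec_eq_iff divide_inverse mult.commute)

lemma normalize_columns_in_nonneg_stiefel:
  assumes nonneg: "\<And>i j. 0 \<le> D$i$j"
    and disjoint: "\<And>i j l. j \<noteq> l \<Longrightarrow> D$i$j * D$i$l = 0"
    and nonzero: "\<And>j. column j D \<noteq> 0"
  shows "normalize_columns D \<in> nonneg_stiefel"
proof -
  have "normalize_columns D \<in> nonneg_mats"
    using nonneg by (simp add: normalize_columns_def nonneg_mats_def)
  moreover have "sgn (column j D) \<bullet> sgn (column l D) = (if j = l then 1 else 0)" for j l
  proof (cases "j = l")
    case True
    have "norm (sgn (column j D)) = 1" using nonzero[of j] by (simp add: norm_sgn)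
    then show ?thesis using True by (simp add: norm_eq_1)
  next
    case False
    then have "column j D \<bullet> column l D = 0"
      unfolding inner_vec_def column_def using disjoint[OF False] by (simp add: sum.neutral)
    then show ?thesis using False by (simp add: sgn_div_norm)
  qed
  then have "normalize_columns D \<in> stiefel"
    by (simp add: stiefel_iff_columns column_normalize_columns)
  ultimately show ?thesis by (simp add: nonneg_stiefel_def)
qed

lemma power2_diff_one_le:
  fixes N q :: real
  assumes "0 \<le> N" and "0 \<le> q" and "N\<^sup>2 + q = 1"
  shows "(N - 1)\<^sup>2 \<le> q\<^sup>2"
proof -
  have "N\<^sup>2 \<le> 1\<^sup>2" using assms(2,3) by simp
  then have "N \<le> 1" by (rule power2_le_imp_le) simp
  then have "1 - N \<le> q"
    using assms(1,3) mult_left_mono[of N 1 N] by (simp add: power2_eq_square)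
  then show ?thesis
    using \<open>N \<le> 1\<close> by (simp add: power2_commute[of N] power_mono)
qed

lemma stiefel_column_pythagoras:
  fixes Y D :: "real^'r^'n"
  assumes Y: "Y \<in> stiefel" and orth: "\<And>i. D$i$j * (Y - D)$i$j = 0"
  shows "(norm (column j D))\<^sup>2 + (norm (column j (Y - D)))\<^sup>2 = 1"
proof -
  have "orthogonal (column j D) (column j (Y - D))"
    unfolding orthogonal_def inner_vec_def column_def using orth by (simp add: sum.neutral)
  then have "(norm (column j D + column j (Y - D)))\<^sup>2
      = (norm (column j D))\<^sup>2 + (norm (column j (Y - D)))\<^sup>2"
    by (rule norm_add_Pythagorean)
  then show ?thesis
    using stiefel_norm_column[OF Y, of j] by (simp add: column_diff)
qed

lemma normalize_columns_close:
  fixes Y D :: "real^'r^'n"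
  assumes Y: "Y \<in> stiefel"
    and orth: "\<And>i j. D$i$j * (Y - D)$i$j = 0"
    and close: "norm (Y - D) < 1"
  shows "column j D \<noteq> 0"
    and "norm (D - normalize_columns D) \<le> (norm (Y - D))\<^sup>2"
proof -
  define t where "t = (norm (Y - D))\<^sup>2"
  define q where "q j = (norm (column j (Y - D)))\<^sup>2" for j
  have pythagoras: "(norm (column j D))\<^sup>2 + q j = 1" for j
    unfolding q_def using Y orth by (rule stiefel_column_pythagoras)
  have q_nonneg: "0 \<le> q j" for j by (simp add: q_def)
  have q_le: "q j \<le> t" for j
    unfolding q_def t_def by (intro power_mono norm_column_le) simp
  have t_lt_1: "t < 1"
    using close by (simp add: t_def power_less_one_iff)
  show nonzero: "column j D \<noteq> 0" for j
    using pythagoras[of j] q_le[of j] t_lt_1 by auto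
  have "(norm (column j D) - 1)\<^sup>2 \<le> q j * t" for j
  proof -
    have "(norm (column j D) - 1)\<^sup>2 \<le> (q j)\<^sup>2"
      using pythagoras[of j] q_nonneg[of j] by (intro power2_diff_one_le) simp_all
    also have "\<dots> \<le> q j * t"
      using q_le[of j] q_nonneg[of j] by (simp add: power2_eq_square mult_left_mono)
    finally show ?thesis .
  qed
  then have "(norm (D - normalize_columns D))\<^sup>2 \<le> (\<Sum>j\<in>UNIV. q j * t)"
    unfolding norm_matrix_power2_columns column_diff column_normalize_columns
    by (intro sum_mono) (simp add: norm_diff_sgn nonzero)
  also have "\<dots> = (\<Sum>j\<in>UNIV. q j) * t"
    by (simp add: sum_distrib_right)
  also have "\<dots> = t\<^sup>2"
    unfolding t_def q_def norm_matrix_power2_columns[of "Y - D"] by (simp add: power2_eq_square)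
  finally have "(norm (D - normalize_columns D))\<^sup>2 \<le> t\<^sup>2" .
  then show "norm (D - normalize_columns D) \<le> (norm (Y - D))\<^sup>2"
    unfolding t_def by (rule power2_le_imp_le) simp
qed

section \<open>Off-graph entries of a Stiefel matrix\<close>

lemma inner_columns_pos_part_le:
  fixes Y :: "real^'r^'n"
  assumes Y: "Y \<in> stiefel" and "j \<noteq> l"
  shows "column j (pos_part Y) \<bullet> column l (pos_part Y)
    \<le> norm (column j (neg_part Y)) + norm (column l (neg_part Y))"
proof -
  let ?Y = "\<lambda>j. column j Y" and ?P = "\<lambda>j. column j (pos_part Y)" and ?M = "\<lambda>j. column j (neg_part Y)"
  have P: "?P j = ?Y j + ?M j" for j by (simp add: pos_part_eq column_add)
  have "norm (?P l) \<le> norm (?Y l)"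
    by (intro norm_le_componentwise_cart) (simp add: column_def pos_part_def)
  then have "norm (?P l) \<le> 1" using stiefel_norm_column[OF Y] by simp
  have "?P j \<bullet> ?P l = ?Y j \<bullet> ?M l + ?M j \<bullet> ?P l"
    using stiefel_orthogonal_columns[OF Y \<open>j \<noteq> l\<close>] by (simp add: P[of j] P[of l] inner_add)
  also have "\<dots> \<le> norm (?Y j) * norm (?M l) + norm (?M j) * norm (?P l)"
    by (intro add_mono norm_cauchy_schwarz)
  also have "\<dots> \<le> norm (?M l) + norm (?M j)"
    using stiefel_norm_column[OF Y] \<open>norm (?P l) \<le> 1\<close>
    by (simp add: mult_left_le)
  finally show ?thesis by simp
qed

lemma pos_part_off_graph_le:
  fixes Y :: "real^'r^'n"
  assumes Y: "Y \<in> stiefel" and "0 < c" and "c \<le> Y$i$l" and "j \<noteq> l"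
  shows "(pos_part Y $i$j)\<^sup>2
    \<le> 2 * ((norm (column j (neg_part Y)))\<^sup>2 + (norm (column l (neg_part Y)))\<^sup>2) / c\<^sup>2"
proof -
  let ?P = "pos_part Y" and ?m = "\<lambda>j. norm (column j (neg_part Y))"
  have P_nonneg: "0 \<le> ?P$i'$j'" for i' j' by (simp add: pos_part_def)
  have "?P$i$j * c \<le> ?P$i$j * ?P$i$l"
    using assms(3) by (intro mult_left_mono) (simp_all add: pos_part_def)
  also have "\<dots> \<le> column j ?P \<bullet> column l ?P"
    unfolding inner_vec_def column_def
    by (simp add: member_le_sum[of i UNIV "\<lambda>i. ?P$i$j * ?P$i$l"] P_nonneg)
  also have "\<dots> \<le> ?m j + ?m l"
    using inner_columns_pos_part_le[OF Y \<open>j \<noteq> l\<close>] .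
  finally have "?P$i$j \<le> (?m j + ?m l) / c"
    using \<open>0 < c\<close> by (simp add: pos_le_divide_eq)
  then have "(?P$i$j)\<^sup>2 \<le> ((?m j + ?m l) / c)\<^sup>2"
    using P_nonneg by (intro power_mono) simp_all
  also have "\<dots> \<le> 2 * ((?m j)\<^sup>2 + (?m l)\<^sup>2) / c\<^sup>2"
    unfolding power_divide
    using zero_le_power2[of "?m j - ?m l"] by (intro divide_right_mono) (simp_all add: power2_eq_square algebra_simps)
  finally show ?thesis .
qed

lemma card_fibre_bounds:
  fixes k :: "'n::finite \<Rightarrow> 'r::finite"
  assumes "surj k"
  shows "1 \<le> card {i. k i = j}" and "card {i. k i = j} + CARD('r) \<le> CARD('n) + 1"
proof -
  have pos: "1 \<le> card {i. k i = l}" for l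
  proof -
    obtain i where "k i = l" using assms by (metis surjD)
    then have "{i. k i = l} \<noteq> {}" by blast
    then show ?thesis by (simp add: Suc_le_eq card_gt_0_iff)
  qed
  then show "1 \<le> card {i. k i = j}" .
  have "CARD('n) = (\<Sum>l\<in>UNIV. card {i. k i = l})"
    using sum.group[of UNIV UNIV k "\<lambda>_. 1::nat"] by simp
  also have "\<dots> = card {i. k i = j} + (\<Sum>l\<in>UNIV - {j}. card {i. k i = l})"
    by (simp add: sum.remove)
  finally have "CARD('n) = card {i. k i = j} + (\<Sum>l\<in>UNIV - {j}. card {i. k i = l})" .
  moreover have "CARD('r) - 1 \<le> (\<Sum>l\<in>UNIV - {j}. card {i. k i = l})"
    using sum_mono[of "UNIV - {j}" "\<lambda>_. 1" "\<lambda>l. card {i. k i = l}"] pos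
    by (simp add: card_Diff_singleton)
  moreover have "0 < CARD('r)" by simp
  ultimately show "card {i. k i = j} + CARD('r) \<le> CARD('n) + 1"
    by linarith
qed

text \<open>An upper bound for n + (r - 2) c over the fibre sizes 1 <= c <= n - r + 1 of a surjection
  from n rows onto r columns.\<close>

definition off_graph_bound :: "nat \<Rightarrow> nat \<Rightarrow> real" where
  "off_graph_bound n r = real n - 1 + (real r - 1) * (real n - real r + 1)"

lemma sum_off_graph_le:
  fixes k :: "'n::finite \<Rightarrow> 'r::finite" and w :: "'r \<Rightarrow> real"
  assumes "surj k" and w: "\<And>j. 0 \<le> w j"
  shows "(\<Sum>i\<in>UNIV. \<Sum>j\<in>UNIV. if k i = j then 0 else w j + w (k i))
    \<le> off_graph_bound CARD('n) CARD('r) * (\<Sum>j\<in>UNIV. w j)"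
proof -
  let ?n = "real CARD('n)" and ?r = "real CARD('r)" and ?c = "\<lambda>j. real (card {i. k i = j})"
  have row: "(\<Sum>j\<in>UNIV. if k i = j then 0 else w j + w (k i))
      = (\<Sum>j\<in>UNIV. w j) + (?r - 2) * w (k i)" for i
  proof -
    have "(\<Sum>j\<in>UNIV. if k i = j then 0 else w j + w (k i))
        = (\<Sum>j\<in>UNIV. w j + w (k i)) - (w (k i) + w (k i))"
      by (simp add: sum.remove[of UNIV "k i"] sum.If_cases Compl_eq_Diff_UNIV)
    then show ?thesis by (simp add: sum.distrib algebra_simps)
  qed
  have fibres: "(\<Sum>i\<in>UNIV. w (k i)) = (\<Sum>j\<in>UNIV. ?c j * w j)"
    using sum.group[of UNIV UNIV k "\<lambda>i. w (k i)"] by simp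
  have "(\<Sum>i\<in>UNIV. \<Sum>j\<in>UNIV. if k i = j then 0 else w j + w (k i))
      = ?n * (\<Sum>j\<in>UNIV. w j) + (?r - 2) * (\<Sum>i\<in>UNIV. w (k i))"
    by (simp add: row sum.distrib sum_distrib_left)
  also have "\<dots> = (\<Sum>j\<in>UNIV. (?n + (?r - 2) * ?c j) * w j)"
    by (simp add: fibres sum_distrib_left sum.distrib distrib_right mult.assoc)
  also have "\<dots> \<le> (\<Sum>j\<in>UNIV. off_graph_bound CARD('n) CARD('r) * w j)"
  proof (intro sum_mono mult_right_mono w)
    fix j
    have "1 \<le> ?c j" and "?c j + ?r \<le> ?n + 1"
      using card_fibre_bounds[OF \<open>surj k\<close>, of j] by linarith+
    moreover have "1 \<le> ?r" by (simp add: Suc_le_eq)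
    ultimately have "0 \<le> (?r - 1) * (?n - ?r + 1 - ?c j) + (?c j - 1)"
      by (intro add_nonneg_nonneg mult_nonneg_nonneg) simp_all
    then show "?n + (?r - 2) * ?c j \<le> off_graph_bound CARD('n) CARD('r)"
      by (simp add: off_graph_bound_def algebra_simps)
  qed
  finally show ?thesis by (simp add: sum_distrib_left)
qed

definition graph_part :: "('n \<Rightarrow> 'r) \<Rightarrow> real^'r^'n \<Rightarrow> real^'r^'n" where
  "graph_part k X = (\<chi> i j. if k i = j then X$i$j else 0)"

lemma norm_diff_graph_part_le_of_support:
  fixes Xb Y :: "real^'r^'n" and k :: "'n \<Rightarrow> 'r"
  assumes "\<And>i j. k i \<noteq> j \<Longrightarrow> Xb$i$j = 0"
  shows "norm (Xb - graph_part k Y) \<le> norm (Xb - Y)"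
  using assms by (intro norm_matrix_le_entrywise) (simp add: graph_part_def)

lemma norm_diff_graph_part_le:
  fixes Y :: "real^'r^'n" and k :: "'n \<Rightarrow> 'r"
  assumes Y: "Y \<in> stiefel" and "surj k" and "0 < c" and diag: "\<And>i. c \<le> Y$i$(k i)"
  shows "(norm (Y - graph_part k Y))\<^sup>2
    \<le> (2 * off_graph_bound CARD('n) CARD('r) / c\<^sup>2 + 1) * (norm (neg_part Y))\<^sup>2"
proof -
  let ?M = "neg_part Y" and ?m = "\<lambda>j. (norm (column j (neg_part Y)))\<^sup>2"
  let ?B = "off_graph_bound CARD('n) CARD('r)"
  have entry: "(if k i = j then 0 else (Y$i$j)\<^sup>2)
      \<le> 2 / c\<^sup>2 * (if k i = j then 0 else ?m j + ?m (k i)) + (?M$i$j)\<^sup>2" for i j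
  proof (cases "k i = j")
    case False
    have "(Y$i$j)\<^sup>2 = (pos_part Y $i$j)\<^sup>2 + (?M$i$j)\<^sup>2"
      by (simp add: pos_part_def neg_part_def max_def power2_eq_square)
    also have "(pos_part Y $i$j)\<^sup>2 \<le> 2 / c\<^sup>2 * (?m j + ?m (k i))"
      using pos_part_off_graph_le[OF Y \<open>0 < c\<close> diag[of i]] False by (simp add: eq_commute)
    finally show ?thesis using False by simp
  qed simp
  have "(norm (Y - graph_part k Y))\<^sup>2 = (\<Sum>i\<in>UNIV. \<Sum>j\<in>UNIV. if k i = j then 0 else (Y$i$j)\<^sup>2)"
    unfolding norm_matrix_power2 by (intro sum.cong) (simp_all add: graph_part_def)
  also have "\<dots> \<le> 2 / c\<^sup>2 * (\<Sum>i\<in>UNIV. \<Sum>j\<in>UNIV. if k i = j then 0 else ?m j + ?m (k i))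
      + (norm ?M)\<^sup>2"
    unfolding norm_matrix_power2[of ?M] sum_distrib_left sum.distrib[symmetric]
    by (intro sum_mono entry)
  also have "\<dots> \<le> 2 / c\<^sup>2 * (?B * (\<Sum>j\<in>UNIV. ?m j)) + (norm ?M)\<^sup>2"
    by (intro add_right_mono mult_left_mono sum_off_graph_le \<open>surj k\<close>) simp_all
  also have "\<dots> = (2 * ?B / c\<^sup>2 + 1) * (norm ?M)\<^sup>2"
    by (simp add: norm_matrix_power2_columns[of ?M] algebra_simps)
  finally show ?thesis .
qed

section \<open>The local error bound\<close>

lemma exists_nonneg_stiefel_near_stiefel:
  fixes Xb Y :: "real^'r^'n" and k :: "'n \<Rightarrow> 'r"
  assumes "surj k" and off: "\<And>i j. k i \<noteq> j \<Longrightarrow> Xb$i$j = 0" and diag: "\<And>i. lo \<le> Xb$i$(k i)"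
    and "0 < \<rho>" and "\<rho> \<le> lo / 2" and "\<rho> < 1 / 2"
    and Y: "Y \<in> stiefel" and close: "norm (Y - Xb) \<le> \<rho>"
  obtains Z where "Z \<in> nonneg_stiefel"
    and "norm (Y - Z) \<le> (1 + 2 * \<rho>)
      * sqrt (2 * off_graph_bound CARD('n) CARD('r) / (lo - \<rho>)\<^sup>2 + 1) * norm (neg_part Y)"
proof
  define D where "D = graph_part k Y"
  define t where "t = norm (Y - D)"
  have "0 < lo - \<rho>" using \<open>0 < \<rho>\<close> \<open>\<rho> \<le> lo / 2\<close> by simp
  have diag_Y: "lo - \<rho> \<le> Y$i$(k i)" for i
    using abs_entry_le_norm[of "Y - Xb" i "k i"] close diag[of i] by simp
  have "norm (Xb - D) \<le> norm (Xb - Y)"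
    unfolding D_def by (rule norm_diff_graph_part_le_of_support) (rule off)
  then have "norm (Xb - D) \<le> \<rho>"
    using close by (simp add: norm_minus_commute)
  then have "t \<le> 2 * \<rho>"
    using norm_triangle_ineq[of "Y - Xb" "Xb - D"] close by (simp add: t_def)
  have D_nonneg: "0 \<le> D$i$j" for i j
    using diag_Y[of i] \<open>0 < lo - \<rho>\<close> by (auto simp: D_def graph_part_def)
  have D_orth: "D$i$j * (Y - D)$i$j = 0" for i j
    by (simp add: D_def graph_part_def)
  have D_disjoint: "D$i$j * D$i$l = 0" if "j \<noteq> l" for i j l
    using that by (simp add: D_def graph_part_def)
  have "t < 1" using \<open>t \<le> 2 * \<rho>\<close> \<open>\<rho> < 1 / 2\<close> by simp
  note normalized = normalize_columns_close[OF Y D_orth, folded t_def, OF this]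
  show "normalize_columns D \<in> nonneg_stiefel"
    using D_nonneg D_disjoint normalized(1) by (rule normalize_columns_in_nonneg_stiefel)
  have "norm (Y - normalize_columns D) \<le> t + t\<^sup>2"
    using norm_triangle_ineq[of "Y - D" "D - normalize_columns D"] normalized(2)
    by (simp add: t_def)
  also have "\<dots> \<le> (1 + 2 * \<rho>) * t"
    using \<open>t \<le> 2 * \<rho>\<close> mult_right_mono[of t "2 * \<rho>" t] by (simp add: t_def power2_eq_square algebra_simps)
  also have "t \<le> sqrt ((2 * off_graph_bound CARD('n) CARD('r) / (lo - \<rho>)\<^sup>2 + 1)
      * (norm (neg_part Y))\<^sup>2)"
    using norm_diff_graph_part_le[OF Y \<open>surj k\<close> \<open>0 < lo - \<rho>\<close> diag_Y]
    unfolding D_def t_def by (rule real_le_rsqrt)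
  also have "\<dots> = sqrt (2 * off_graph_bound CARD('n) CARD('r) / (lo - \<rho>)\<^sup>2 + 1) * norm (neg_part Y)"
    by (simp add: real_sqrt_mult)
  finally show "norm (Y - normalize_columns D) \<le> (1 + 2 * \<rho>)
      * sqrt (2 * off_graph_bound CARD('n) CARD('r) / (lo - \<rho>)\<^sup>2 + 1) * norm (neg_part Y)"
    using \<open>0 < \<rho>\<close> by (simp add: mult.assoc mult_left_mono)
qed

text \<open>With \<rho> = lo / 100 one has 1 + 2 \<rho> <= 51/50 and lo - \<rho> = 99/100 * lo; the slack in the
  constants of kappa absorbs these factors.\<close>

lemma error_constant_le:
  fixes lo B K :: real
  assumes "0 < lo" and "lo \<le> 1" and "0 \<le> B" and "0 \<le> K"
    and bound: "(51/50)\<^sup>2 * (2 * B / (99/100)\<^sup>2 + 1) \<le> (K * lo)\<^sup>2"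
  shows "(1 + 2 * (lo / 100)) * sqrt (2 * B / (lo - lo / 100)\<^sup>2 + 1) \<le> K"
proof -
  let ?L = "(1 + 2 * (lo / 100)) * sqrt (2 * B / (lo - lo / 100)\<^sup>2 + 1)"
  have "?L\<^sup>2 * lo\<^sup>2 = (1 + lo / 50)\<^sup>2 * (2 * B / (99/100)\<^sup>2 + lo\<^sup>2)"
    using assms(1,3) by (simp add: power_mult_distrib power2_eq_square field_simps)
  also have "\<dots> \<le> (51/50)\<^sup>2 * (2 * B / (99/100)\<^sup>2 + 1)"
    using assms(1-3) by (intro mult_mono power_mono add_left_mono) (simp_all add: power_le_one)
  also have "\<dots> \<le> K\<^sup>2 * lo\<^sup>2"
    using bound by (simp add: power_mult_distrib)
  finally have "?L\<^sup>2 \<le> K\<^sup>2"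
    using assms(1) by simp
  then show ?thesis
    using assms(4) by (rule power2_le_imp_le)
qed

lemma kappa_nonneg:
  fixes Xb :: "real^'r^'n"
  assumes "Xb \<in> nonneg_stiefel" and "CARD('r) \<le> CARD('n)"
  shows "0 \<le> kappa Xb"
  using assms min_nonzero_entry_nonneg_stiefel(1)[OF assms(1)]
  by (simp add: kappa_def Let_def)

lemma kappa_square_bound:
  fixes Xb :: "real^'r^'n"
  assumes "CARD('n) = CARD('r)"
  shows "(51/50)\<^sup>2 * (2 * off_graph_bound CARD('n) CARD('r) / (99/100)\<^sup>2 + 1) \<le> (kappa Xb * 1)\<^sup>2"
  using assms by (simp add: kappa_def off_graph_bound_def power_mult_distrib field_simps)

lemma kappa_tall_bound:
  fixes Xb :: "real^'r^'n"
  assumes "CARD('r) < CARD('n)" and "1 < CARD('r)" and "0 < min_nonzero_entry Xb"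
  shows "(51/50)\<^sup>2 * (2 * off_graph_bound CARD('n) CARD('r) / (99/100)\<^sup>2 + 1)
    \<le> (kappa Xb * min_nonzero_entry Xb)\<^sup>2"
proof -
  define r where "r = real CARD('r)"
  define u where "u = r * (real CARD('n) - real CARD('r))"
  have "1 \<le> r" using assms(2) by (simp add: r_def)
  moreover have "1 \<le> real CARD('n) - real CARD('r)" using assms(1) by simp
  ultimately have "1 \<le> u" using mult_mono[of 1 r 1] by (simp add: u_def)
  have "kappa Xb * min_nonzero_entry Xb = 2.1 * sqrt r * (1 + 3 * u)"
    using assms by (simp add: kappa_def Let_def r_def u_def)
  moreover have "off_graph_bound CARD('n) CARD('r) = u + 2 * r - 2"
    by (simp add: off_graph_bound_def r_def u_def algebra_simps)
  moreover have "(51/50)\<^sup>2 * (2 * (u + 2 * r - 2) / (99/100)\<^sup>2 + 1) \<le> (2.1 * sqrt r * (1 + 3 * u))\<^sup>2"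
  proof -
    have "(51/50)\<^sup>2 * (2 * (u + 2 * r - 2) / (99/100)\<^sup>2 + 1) = 2601/2500 + 20808/9801 * u + 41616/9801 * r - 41616/9801"
      by (simp add: power2_eq_square field_simps)
    also have "\<dots> \<le> 441/100 * r + 2646/100 * (r * u)"
    proof -
      have "u \<le> r * u" using mult_right_mono[of 1 r u] \<open>1 \<le> r\<close> \<open>1 \<le> u\<close> by simp
      then show ?thesis using \<open>1 \<le> r\<close> \<open>1 \<le> u\<close> by linarith
    qed
    also have "\<dots> = 441/100 * r * (1 + 6 * u)"
      by (simp add: algebra_simps)
    also have "\<dots> \<le> 441/100 * r * (1 + 3 * u)\<^sup>2"
      using \<open>1 \<le> r\<close> \<open>1 \<le> u\<close> by (intro mult_left_mono) (simp_all add: power2_eq_square algebra_simps)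
    also have "\<dots> = (2.1 * sqrt r * (1 + 3 * u))\<^sup>2"
      using \<open>1 \<le> r\<close> by (simp add: power_mult_distrib power_divide)
    finally show ?thesis .
  qed
  ultimately show ?thesis by (simp only:)
qed

lemma nonneg_stiefel_support_graph_kappa:
  fixes Xb :: "real^'r^'n"
  assumes "CARD('r) \<le> CARD('n)" and Xb: "Xb \<in> nonneg_stiefel"
    and "CARD('n) > CARD('r) \<and> CARD('r) > 1 \<longrightarrow> no_zero_rows Xb"
    and "CARD('n) = CARD('r) \<or> CARD('r) > 1"
  obtains k lo where "surj k" and "\<And>i j. k i \<noteq> j \<Longrightarrow> Xb$i$j = 0"
    and "\<And>i. lo \<le> Xb$i$(k i)" and "0 < lo" and "lo \<le> 1"
    and "(51/50)\<^sup>2 * (2 * off_graph_bound CARD('n) CARD('r) / (99/100)\<^sup>2 + 1) \<le> (kappa Xb * lo)\<^sup>2"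
proof (cases "CARD('n) = CARD('r)")
  case True
  obtain k where "surj k" and graph: "\<And>i j. Xb$i$j \<noteq> 0 \<longleftrightarrow> k i = j"
    using nonneg_stiefel_support_graph[OF Xb nonneg_stiefel_square_no_zero_rows[OF Xb True]] by blast
  have "Xb$i$(k i) = 1" for i
    using nonneg_stiefel_square_entry[OF Xb True] graph by blast
  then show ?thesis
    using that[of k 1] \<open>surj k\<close> graph kappa_square_bound[OF True] by auto
next
  case False
  then have tall: "CARD('r) < CARD('n)" "1 < CARD('r)"
    using assms(1,4) by simp_all
  then obtain k where "surj k" and graph: "\<And>i j. Xb$i$j \<noteq> 0 \<longleftrightarrow> k i = j"
    using nonneg_stiefel_support_graph[OF Xb] assms(3) by blast
  have "min_nonzero_entry Xb \<le> Xb$i$(k i)" for i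
    using graph by (intro min_nonzero_entry_le) blast
  then show ?thesis
    using that \<open>surj k\<close> graph min_nonzero_entry_nonneg_stiefel[OF Xb]
      kappa_tall_bound[OF tall min_nonzero_entry_nonneg_stiefel(1)[OF Xb]]
    by blast
qed

lemma off_graph_bound_nonneg: "1 \<le> r \<Longrightarrow> r \<le> n \<Longrightarrow> 0 \<le> off_graph_bound n r"
  by (simp add: off_graph_bound_def)

lemma stiefel_local_error_bound:
  fixes Xb :: "real^'r^'n"
  assumes "CARD('r) \<le> CARD('n)" and Xb: "Xb \<in> nonneg_stiefel"
    and "CARD('n) > CARD('r) \<and> CARD('r) > 1 \<longrightarrow> no_zero_rows Xb"
    and "CARD('n) = CARD('r) \<or> CARD('r) > 1"
  obtains \<rho> where "0 < \<rho>" and "\<And>Y. Y \<in> stiefel \<Longrightarrow> norm (Y - Xb) \<le> \<rho> \<Longrightarrow>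
    \<exists>Z\<in>nonneg_stiefel. norm (Y - Z) \<le> kappa Xb * norm (neg_part Y)"
proof -
  obtain k lo where graph: "surj k" "\<And>i j. k i \<noteq> j \<Longrightarrow> Xb$i$j = 0" "\<And>i. lo \<le> Xb$i$(k i)"
    and "0 < lo" and "lo \<le> 1"
    and const: "(51/50)\<^sup>2 * (2 * off_graph_bound CARD('n) CARD('r) / (99/100)\<^sup>2 + 1) \<le> (kappa Xb * lo)\<^sup>2"
    using nonneg_stiefel_support_graph_kappa[OF assms] by blast
  have "0 \<le> off_graph_bound CARD('n) CARD('r)"
    using assms(1) by (intro off_graph_bound_nonneg) (simp_all add: Suc_le_eq)
  then have kappa_ge: "(1 + 2 * (lo / 100)) * sqrt (2 * off_graph_bound CARD('n) CARD('r) / (lo - lo / 100)\<^sup>2 + 1)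
      \<le> kappa Xb"
    using \<open>0 < lo\<close> \<open>lo \<le> 1\<close> kappa_nonneg[OF Xb assms(1)] const by (intro error_constant_le)
  have rho: "0 < lo / 100" "lo / 100 \<le> lo / 2" "lo / 100 < 1 / 2"
    using \<open>0 < lo\<close> \<open>lo \<le> 1\<close> by simp_all
  have "\<exists>Z\<in>nonneg_stiefel. norm (Y - Z) \<le> kappa Xb * norm (neg_part Y)"
    if Y: "Y \<in> stiefel" and close: "norm (Y - Xb) \<le> lo / 100" for Y
  proof -
    obtain Z where "Z \<in> nonneg_stiefel" and "norm (Y - Z) \<le> (1 + 2 * (lo / 100))
        * sqrt (2 * off_graph_bound CARD('n) CARD('r) / (lo - lo / 100)\<^sup>2 + 1) * norm (neg_part Y)"
      using exists_nonneg_stiefel_near_stiefel[OF graph rho Y close] by blast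
    with kappa_ge show ?thesis
      by (meson mult_right_mono norm_ge_zero order_trans)
  qed
  with rho(1) show ?thesis using that by blast
qed

lemma infdist_nonneg_stiefel_le_from_stiefel_bound:
  fixes Xb X :: "real^'r^'n"
  assumes Xb: "Xb \<in> nonneg_stiefel" and "0 \<le> K"
    and bound: "\<And>Y. Y \<in> stiefel \<Longrightarrow> norm (Y - Xb) \<le> \<rho> \<Longrightarrow> \<exists>Z\<in>nonneg_stiefel. norm (Y - Z) \<le> K * norm (neg_part Y)"
    and close: "norm (X - Xb) \<le> \<rho> / 2"
  shows "infdist X nonneg_stiefel \<le> (K + 1) * (infdist X nonneg_mats + infdist X stiefel)"
proof (rule le_mult_add_infdist)
  show "(stiefel :: (real^'r^'n) set) \<noteq> {}" using nonneg_stiefel_stiefel[OF Xb] by blast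
  show "0 < K + 1" using \<open>0 \<le> K\<close> by simp
  fix Y :: "real^'r^'n" assume Y: "Y \<in> stiefel"
  have "0 \<le> infdist X nonneg_mats" by (rule infdist_nonneg)
  show "infdist X nonneg_stiefel \<le> (K + 1) * (infdist X nonneg_mats + dist X Y)"
  proof (cases "\<rho> / 2 \<le> dist X Y")
    case True
    have "infdist X nonneg_stiefel \<le> dist X Y"
      using infdist_le[OF Xb, of X] close True by (simp add: dist_norm)
    also have "\<dots> \<le> (K + 1) * (infdist X nonneg_mats + dist X Y)"
      using \<open>0 \<le> K\<close> \<open>0 \<le> infdist X nonneg_mats\<close> mult_mono[of 1 "K + 1" "dist X Y"] by simp
    finally show ?thesis .
  next
    case False
    then have "norm (Y - Xb) \<le> \<rho>"
      using norm_triangle_ineq[of "Y - X" "X - Xb"] close by (simp add: dist_norm norm_minus_commute)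
    then obtain Z where "Z \<in> nonneg_stiefel" and Z: "norm (Y - Z) \<le> K * norm (neg_part Y)"
      using bound[OF Y] by blast
    have "norm (neg_part Y) \<le> infdist X nonneg_mats + dist X Y"
      using infdist_triangle[of Y nonneg_mats X] by (simp add: infdist_nonneg_mats dist_commute)
    then have "norm (Y - Z) \<le> K * (infdist X nonneg_mats + dist X Y)"
      using Z \<open>0 \<le> K\<close> by (meson mult_left_mono order_trans)
    then have "dist X Z \<le> dist X Y + K * (infdist X nonneg_mats + dist X Y)"
      using dist_triangle[of X Z Y] by (simp add: dist_norm)
    then show ?thesis
      using infdist_le[OF \<open>Z \<in> nonneg_stiefel\<close>, of X] \<open>0 \<le> infdist X nonneg_mats\<close>
      by (simp add: algebra_simps)
  qed
qed

theorem proposition3p3: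
  fixes Xbar :: "real^'r^'n"
  assumes "CARD('r) \<le> CARD('n)"
    and "Xbar \<in> nonneg_stiefel"
    and "CARD('n) > CARD('r) \<and> CARD('r) > 1 \<longrightarrow> no_zero_rows Xbar"
  shows "\<exists>\<delta>>0. \<forall>X :: real^'r^'n. norm (X - Xbar) \<le> \<delta> \<longrightarrow>
           infdist X nonneg_stiefel
             \<le> (kappa Xbar + 1) * (infdist X nonneg_mats + infdist X stiefel)"
proof (cases "CARD('r) = 1 \<and> CARD('r) < CARD('n)")
  case True
  then have "kappa Xbar = 1" by (simp add: kappa_def)
  moreover have "infdist X nonneg_stiefel \<le> 2 * (infdist X nonneg_mats + infdist X stiefel)"
    for X :: "real^'r^'n"
    using infdist_nonneg_stiefel_single_column[of X] True assms(2) by blast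
  ultimately show ?thesis by (intro exI[of _ 1]) simp
next
  case False
  have "0 < CARD('r)" by simp
  then have "CARD('n) = CARD('r) \<or> CARD('r) > 1"
    using False assms(1) by linarith
  then obtain \<rho> where "0 < \<rho>" and stiefel_bound: "\<And>Y. Y \<in> stiefel \<Longrightarrow> norm (Y - Xbar) \<le> \<rho> \<Longrightarrow>
      \<exists>Z\<in>nonneg_stiefel. norm (Y - Z) \<le> kappa Xbar * norm (neg_part Y)"
    using stiefel_local_error_bound[OF assms] by blast
  have "infdist X nonneg_stiefel \<le> (kappa Xbar + 1) * (infdist X nonneg_mats + infdist X stiefel)"
    if "norm (X - Xbar) \<le> \<rho> / 2" for X :: "real^'r^'n"
    using infdist_nonneg_stiefel_le_from_stiefel_bound[OF assms(2) kappa_nonneg[OF assms(2,1)]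
        stiefel_bound that] .
  moreover have "0 < \<rho> / 2" using \<open>0 < \<rho>\<close> by simp
  ultimately show ?thesis by blast
qed

end
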